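(* Let $f_0,f_1$ be finitely supported probability distributions on $G$ and let $(f_t)_{t\in[0,1]}$ be a $W_1$-geodesic joining them. Let $0\le s\le t\le1$ and let $x,y$ be adjacent vertices such that $x\to y$ for the $W_1$-orientation with respect to $(f_s,f_t)$. Then $x\to y$ for the $W_1$-orientation with respect to $(f_0,f_1)$.
   Context: $G$ is a connected, locally finite graph with graph distance $d$. Paths $\gamma(0),\dots,\gamma(n)$ (consecutive vertices adjacent) have length $L(\gamma)=n$, $e_0(\gamma)=\gamma(0)$, $e_1(\gamma)=\gamma(n)$, and are geodesics if $n=d(\gamma(0),\gamma(n))$. Probability distributions are $f:G\to[0,\infty)$ with $\sum f=1$. For probability distributions $\mu,\nu$: $W_1(\mu,\nu)=\inf_\pi\sum d(x,y)\pi(x,y)$ over couplings $\pi$ (nonnegative functions on $G\times G$ with marginals $\mu,\nu$), $\Pi_1(\mu,\nu)$ is the set of minimizers, $\mathcal{C}(\mu,\nu)=\{(x,y):\pi(x,y)>0\text{ for some }\pi\in\Pi_1(\mu,\nu)\}$, and the $W_1$-orientation with respect to $(\mu,\nu)$ declares $x\to y$ (for adjacent $x,y$) iff there exist a geodesic $\gamma$ with $(e_0(\gamma),e_1(\gamma))\in\mathcal{C}(\mu,\nu)$ and $k$ with $\gamma(k)=x$, $\gamma(k+1)=y$. A $W_1$-geodesic is a family $(f_t)_{t\in[0,1]}$ of probability distributions with $W_1(f_s,f_t)=|t-s|W_1(f_0,f_1)$ for all $s,t\in[0,1]$. *)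

theory Defs
  imports "HOL-Analysis.Analysis"
begin

text \<open>A graph is given by a vertex type 'a (the whole type is the vertex set G)
 and an adjacency relation E.\<close>

definition simple_graph :: "('a \<Rightarrow> 'a \<Rightarrow> bool) \<Rightarrow> bool" where
  "simple_graph E \<longleftrightarrow> (\<forall>x y. E x y \<longrightarrow> E y x) \<and> (\<forall>x. \<not> E x x)"

definition is_path :: "('a \<Rightarrow> 'a \<Rightarrow> bool) \<Rightarrow> (nat \<Rightarrow> 'a) \<Rightarrow> nat \<Rightarrow> bool" where
  "is_path E \<gamma> n \<longleftrightarrow> (\<forall>k<n. E (\<gamma> k) (\<gamma> (Suc k)))"

definition connected_graph :: "('a \<Rightarrow> 'a \<Rightarrow> bool) \<Rightarrow> bool" where
  "connected_graph E \<longleftrightarrow> (\<forall>x y. \<exists>\<gamma> n. is_path E \<gamma> n \<and> \<gamma> 0 = x \<and> \<gamma> n = y)"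

definition locally_finite :: "('a \<Rightarrow> 'a \<Rightarrow> bool) \<Rightarrow> bool" where
  "locally_finite E \<longleftrightarrow> (\<forall>x. finite {y. E x y})"

definition gdist :: "('a \<Rightarrow> 'a \<Rightarrow> bool) \<Rightarrow> 'a \<Rightarrow> 'a \<Rightarrow> nat" where
  "gdist E x y = (LEAST n. \<exists>\<gamma>. is_path E \<gamma> n \<and> \<gamma> 0 = x \<and> \<gamma> n = y)"

definition is_geodesic :: "('a \<Rightarrow> 'a \<Rightarrow> bool) \<Rightarrow> (nat \<Rightarrow> 'a) \<Rightarrow> nat \<Rightarrow> bool" where
  "is_geodesic E \<gamma> n \<longleftrightarrow> is_path E \<gamma> n \<and> n = gdist E (\<gamma> 0) (\<gamma> n)"

definition prob_dist :: "('a \<Rightarrow> real) \<Rightarrow> bool" where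
  "prob_dist f \<longleftrightarrow> (\<forall>x. 0 \<le> f x) \<and> (f has_sum 1) UNIV"

definition coupling :: "('a \<Rightarrow> real) \<Rightarrow> ('a \<Rightarrow> real) \<Rightarrow> ('a \<times> 'a \<Rightarrow> real) \<Rightarrow> bool" where
  "coupling \<mu> \<nu> \<pi> \<longleftrightarrow> (\<forall>p. 0 \<le> \<pi> p)
     \<and> (\<forall>x. ((\<lambda>y. \<pi> (x, y)) has_sum \<mu> x) UNIV)
     \<and> (\<forall>y. ((\<lambda>x. \<pi> (x, y)) has_sum \<nu> y) UNIV)"

definition tcost :: "('a \<Rightarrow> 'a \<Rightarrow> bool) \<Rightarrow> ('a \<times> 'a \<Rightarrow> real) \<Rightarrow> ennreal" where
  "tcost E \<pi> = (\<Sum>\<^sub>\<infinity>p. ennreal (real (gdist E (fst p) (snd p)) * \<pi> p))"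

definition W1 :: "('a \<Rightarrow> 'a \<Rightarrow> bool) \<Rightarrow> ('a \<Rightarrow> real) \<Rightarrow> ('a \<Rightarrow> real) \<Rightarrow> ennreal" where
  "W1 E \<mu> \<nu> = (INF \<pi>\<in>{\<pi>. coupling \<mu> \<nu> \<pi>}. tcost E \<pi>)"

definition Pi1 :: "('a \<Rightarrow> 'a \<Rightarrow> bool) \<Rightarrow> ('a \<Rightarrow> real) \<Rightarrow> ('a \<Rightarrow> real) \<Rightarrow> ('a \<times> 'a \<Rightarrow> real) set" where
  "Pi1 E \<mu> \<nu> = {\<pi>. coupling \<mu> \<nu> \<pi> \<and> tcost E \<pi> = W1 E \<mu> \<nu>}"

definition Csupp :: "('a \<Rightarrow> 'a \<Rightarrow> bool) \<Rightarrow> ('a \<Rightarrow> real) \<Rightarrow> ('a \<Rightarrow> real) \<Rightarrow> ('a \<times> 'a) set" where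
  "Csupp E \<mu> \<nu> = {p. \<exists>\<pi>\<in>Pi1 E \<mu> \<nu>. \<pi> p > 0}"

definition W1_orient :: "('a \<Rightarrow> 'a \<Rightarrow> bool) \<Rightarrow> ('a \<Rightarrow> real) \<Rightarrow> ('a \<Rightarrow> real) \<Rightarrow> 'a \<Rightarrow> 'a \<Rightarrow> bool" where
  "W1_orient E \<mu> \<nu> x y \<longleftrightarrow> E x y \<and>
     (\<exists>\<gamma> n k. is_geodesic E \<gamma> n \<and> (\<gamma> 0, \<gamma> n) \<in> Csupp E \<mu> \<nu>
        \<and> k < n \<and> \<gamma> k = x \<and> \<gamma> (Suc k) = y)"

definition W1_geodesic :: "('a \<Rightarrow> 'a \<Rightarrow> bool) \<Rightarrow> (real \<Rightarrow> 'a \<Rightarrow> real) \<Rightarrow> bool" where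
  "W1_geodesic E f \<longleftrightarrow> (\<forall>t\<in>{0..1}. prob_dist (f t)) \<and>
     (\<forall>s\<in>{0..1}. \<forall>t\<in>{0..1}. W1 E (f s) (f t) = ennreal \<bar>t - s\<bar> * W1 E (f 0) (f 1))"

end

theory Submission
  imports Defs
begin

text \<open>
  Take an optimal plan from \<open>f\<^sub>s\<close> to \<open>f\<^sub>t\<close> that moves mass \<open>m > 0\<close> from \<open>u\<close> to \<open>v\<close>, where a
  geodesic from \<open>u\<close> to \<open>v\<close> crosses the edge \<open>xy\<close>. Gluing it with \<open>\<epsilon>/2\<close>-optimal plans from
  \<open>f\<^sub>0\<close> to \<open>f\<^sub>s\<close> and from \<open>f\<^sub>t\<close> to \<open>f\<^sub>1\<close> gives a distribution of chains \<open>a \<rightarrow> u' \<rightarrow> v' \<rightarrow> b\<close>.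
  Since graph distances are integers, each chain with \<open>d(a,u') + d(u',v') + d(v',b) > d(a,b)\<close>
  wastes at least one unit per unit of mass, so the endpoint coupling of \<open>f\<^sub>0\<close> and \<open>f\<^sub>1\<close> costs at
  most \<open>W\<^sub>1(f\<^sub>0,f\<^sub>s) + W\<^sub>1(f\<^sub>s,f\<^sub>t) + W\<^sub>1(f\<^sub>t,f\<^sub>1) + \<epsilon> = W\<^sub>1(f\<^sub>0,f\<^sub>1) + \<epsilon>\<close> minus the mass of such
  wasteful chains. Hence all but \<open>\<epsilon>\<close> of the mass \<open>m\<close> sits on pairs \<open>(a, b)\<close> with
  \<open>d(a,u) + d(u,v) + d(v,b) = d(a,b)\<close>. As \<open>f\<^sub>0\<close> and \<open>f\<^sub>1\<close> are finitely supported, these couplings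
  accumulate at an optimal coupling that charges such a pair, and concatenating geodesics
  \<open>a \<rightarrow> u\<close>, \<open>u \<rightarrow> v\<close> (through \<open>xy\<close>) and \<open>v \<rightarrow> b\<close> gives a geodesic from \<open>a\<close> to \<open>b\<close> through \<open>xy\<close>.
\<close>

section \<open>Nonnegative infinite sums\<close>

lemma ennreal_summable_on [simp]: "(f :: 'a \<Rightarrow> ennreal) summable_on A"
  by (rule nonneg_summable_on_complete) simp

lemma infsum_ennreal_SUP:
  fixes f :: "'a \<Rightarrow> ennreal"
  shows "infsum f A = (SUP F\<in>{F. finite F \<and> F \<subseteq> A}. sum f F)"
  by (rule nonneg_infsum_complete) simp

lemma infsum_ennreal_cmult_left:
  fixes f :: "'a \<Rightarrow> ennreal"
  shows "(\<Sum>\<^sub>\<infinity>x\<in>A. c * f x) = c * (\<Sum>\<^sub>\<infinity>x\<in>A. f x)"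
  by (simp add: infsum_ennreal_SUP SUP_mult_left_ennreal sum_distrib_left)

lemma infsum_ennreal_cmult_right:
  fixes f :: "'a \<Rightarrow> ennreal"
  shows "(\<Sum>\<^sub>\<infinity>x\<in>A. f x * c) = (\<Sum>\<^sub>\<infinity>x\<in>A. f x) * c"
  using infsum_ennreal_cmult_left[of c f A] by (simp add: mult.commute)

lemma infsum_ennreal_add:
  fixes f g :: "'a \<Rightarrow> ennreal"
  shows "(\<Sum>\<^sub>\<infinity>x\<in>A. f x + g x) = (\<Sum>\<^sub>\<infinity>x\<in>A. f x) + (\<Sum>\<^sub>\<infinity>x\<in>A. g x)"
  by (rule infsum_add) simp_all

lemma infsum_ennreal_mono:
  fixes f g :: "'a \<Rightarrow> ennreal"
  shows "(\<And>x. x \<in> A \<Longrightarrow> f x \<le> g x) \<Longrightarrow> infsum f A \<le> infsum g A"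
  by (rule infsum_mono) simp_all

lemma infsum_ennreal_mono_set:
  fixes f :: "'a \<Rightarrow> ennreal"
  shows "A \<subseteq> B \<Longrightarrow> infsum f A \<le> infsum f B"
  by (rule infsum_mono_neutral) auto

lemma infsum_ennreal_ge_term:
  fixes f :: "'a \<Rightarrow> ennreal"
  shows "x \<in> A \<Longrightarrow> f x \<le> infsum f A"
  using infsum_ennreal_mono_set[of "{x}" A f] by simp

lemma infsum_ennreal_ge_term2:
  fixes f :: "'a \<Rightarrow> 'b \<Rightarrow> ennreal"
  shows "f x y \<le> (\<Sum>\<^sub>\<infinity>x'. \<Sum>\<^sub>\<infinity>y'. f x' y')"
proof -
  have "f x y \<le> (\<Sum>\<^sub>\<infinity>y'. f x y')" by (rule infsum_ennreal_ge_term) simp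
  also have "\<dots> \<le> (\<Sum>\<^sub>\<infinity>x'. \<Sum>\<^sub>\<infinity>y'. f x' y')"
    by (rule infsum_ennreal_ge_term[where f = "\<lambda>x'. \<Sum>\<^sub>\<infinity>y'. f x' y'"]) simp
  finally show ?thesis .
qed

lemma infsum_ennreal_Times_finite:
  fixes f :: "'a \<times> 'b \<Rightarrow> ennreal"
  assumes "finite G"
  shows "(\<Sum>\<^sub>\<infinity>p\<in>G \<times> B. f p) = (\<Sum>x\<in>G. \<Sum>\<^sub>\<infinity>y\<in>B. f (x, y))"
  using assms
proof (induction G rule: finite_induct)
  case empty
  then show ?case by simp
next
  case (insert x G)
  have "insert x G \<times> B = Pair x ` B \<union> G \<times> B" and "Pair x ` B \<inter> G \<times> B = {}"
    using insert by auto
  then have "(\<Sum>\<^sub>\<infinity>p\<in>insert x G \<times> B. f p) = (\<Sum>\<^sub>\<infinity>p\<in>Pair x ` B. f p) + (\<Sum>\<^sub>\<infinity>p\<in>G \<times> B. f p)"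
    by (simp add: infsum_Un_disjoint)
  also have "(\<Sum>\<^sub>\<infinity>p\<in>Pair x ` B. f p) = (\<Sum>\<^sub>\<infinity>y\<in>B. f (x, y))"
    by (subst infsum_reindex) (auto simp: inj_on_def o_def)
  finally show ?case using insert by simp
qed

lemma infsum_ennreal_prod:
  fixes f :: "'a \<times> 'b \<Rightarrow> ennreal"
  shows "(\<Sum>\<^sub>\<infinity>p. f p) = (\<Sum>\<^sub>\<infinity>x. \<Sum>\<^sub>\<infinity>y. f (x, y))"
proof (rule antisym)
  show "(\<Sum>\<^sub>\<infinity>p. f p) \<le> (\<Sum>\<^sub>\<infinity>x. \<Sum>\<^sub>\<infinity>y. f (x, y))"
    unfolding infsum_ennreal_SUP[of f]
  proof (rule SUP_least)
    fix S :: "('a \<times> 'b) set"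
    assume "S \<in> {F. finite F \<and> F \<subseteq> UNIV}"
    then have S: "finite S" by simp
    have "sum f S = (\<Sum>\<^sub>\<infinity>p\<in>S. f p)" using S by simp
    also have "\<dots> \<le> (\<Sum>\<^sub>\<infinity>p\<in>fst ` S \<times> UNIV. f p)"
      by (rule infsum_ennreal_mono_set) force
    also have "\<dots> = (\<Sum>\<^sub>\<infinity>x\<in>fst ` S. \<Sum>\<^sub>\<infinity>y. f (x, y))"
      using S by (simp add: infsum_ennreal_Times_finite)
    also have "\<dots> \<le> (\<Sum>\<^sub>\<infinity>x. \<Sum>\<^sub>\<infinity>y. f (x, y))"
      by (rule infsum_ennreal_mono_set) simp
    finally show "sum f S \<le> (\<Sum>\<^sub>\<infinity>x. \<Sum>\<^sub>\<infinity>y. f (x, y))" .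
  qed
next
  show "(\<Sum>\<^sub>\<infinity>x. \<Sum>\<^sub>\<infinity>y. f (x, y)) \<le> (\<Sum>\<^sub>\<infinity>p. f p)"
    unfolding infsum_ennreal_SUP[of "\<lambda>x. \<Sum>\<^sub>\<infinity>y. f (x, y)"]
  proof (rule SUP_least)
    fix G :: "'a set"
    assume "G \<in> {F. finite F \<and> F \<subseteq> UNIV}"
    then have "(\<Sum>x\<in>G. \<Sum>\<^sub>\<infinity>y. f (x, y)) = (\<Sum>\<^sub>\<infinity>p\<in>G \<times> UNIV. f p)"
      by (simp add: infsum_ennreal_Times_finite)
    also have "\<dots> \<le> (\<Sum>\<^sub>\<infinity>p. f p)" by (rule infsum_ennreal_mono_set) simp
    finally show "(\<Sum>x\<in>G. \<Sum>\<^sub>\<infinity>y. f (x, y)) \<le> (\<Sum>\<^sub>\<infinity>p. f p)" .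
  qed
qed

lemma infsum_ennreal_swap:
  fixes f :: "'a \<Rightarrow> 'b \<Rightarrow> ennreal"
  shows "(\<Sum>\<^sub>\<infinity>x. \<Sum>\<^sub>\<infinity>y. f x y) = (\<Sum>\<^sub>\<infinity>y. \<Sum>\<^sub>\<infinity>x. f x y)"
proof -
  have "(\<Sum>\<^sub>\<infinity>x. \<Sum>\<^sub>\<infinity>y. f x y) = (\<Sum>\<^sub>\<infinity>p. f (fst p) (snd p))"
    by (simp add: infsum_ennreal_prod)
  also have "\<dots> = (\<Sum>\<^sub>\<infinity>p. f (snd (prod.swap p)) (fst (prod.swap p)))" by simp
  also have "\<dots> = (\<Sum>\<^sub>\<infinity>q. f (snd q) (fst q))"
    by (rule infsum_reindex_bij_betw) (simp add: bij_betw_def)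
  also have "\<dots> = (\<Sum>\<^sub>\<infinity>y. \<Sum>\<^sub>\<infinity>x. f x y)" by (simp add: infsum_ennreal_prod)
  finally show ?thesis .
qed

lemma infsum_ennreal_finite_support:
  fixes f :: "'a \<Rightarrow> real"
  assumes "finite K" "\<And>x. x \<notin> K \<Longrightarrow> f x = 0" "\<And>x. 0 \<le> f x"
  shows "(\<Sum>\<^sub>\<infinity>x\<in>S. ennreal (f x)) = ennreal (\<Sum>x\<in>S \<inter> K. f x)"
proof -
  have "(\<Sum>\<^sub>\<infinity>x\<in>S. ennreal (f x)) = (\<Sum>\<^sub>\<infinity>x\<in>S \<inter> K. ennreal (f x))"
    by (rule infsum_cong_neutral) (use assms(2) in auto)
  also have "\<dots> = ennreal (\<Sum>x\<in>S \<inter> K. f x)"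
    using assms(1,3) by simp
  finally show ?thesis .
qed

lemma le_of_infsum_ennreal_eq:
  fixes h :: "'a \<Rightarrow> real"
  assumes "(\<Sum>\<^sub>\<infinity>x. ennreal (h x)) = ennreal s" "0 \<le> s"
  shows "h x \<le> s"
  using infsum_ennreal_ge_term[of x UNIV "\<lambda>x. ennreal (h x)"] assms by (simp add: ennreal_le_iff)

lemma has_sum_iff_infsum_ennreal:
  fixes f :: "'a \<Rightarrow> real"
  assumes nonneg: "\<And>x. x \<in> A \<Longrightarrow> 0 \<le> f x" and "0 \<le> s"
  shows "(f has_sum s) A \<longleftrightarrow> (\<Sum>\<^sub>\<infinity>x\<in>A. ennreal (f x)) = ennreal s"
proof -
  have partial: "(\<Sum>x\<in>F. ennreal (f x)) = ennreal (sum f F)" if "F \<subseteq> A" for F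
    using that nonneg by (intro sum_ennreal) auto
  have summable_eq: "(\<Sum>\<^sub>\<infinity>x\<in>A. ennreal (f x)) = ennreal (infsum f A)" if "f summable_on A"
  proof -
    have "ennreal (infsum f A) = (SUP F\<in>{F. finite F \<and> F \<subseteq> A}. ennreal (sum f F))"
      using that nonneg by (rule infsum_nonneg_is_SUPREMUM_ennreal)
    also have "\<dots> = (SUP F\<in>{F. finite F \<and> F \<subseteq> A}. \<Sum>x\<in>F. ennreal (f x))"
      by (intro SUP_cong refl) (simp add: partial)
    finally show ?thesis by (simp add: infsum_ennreal_SUP)
  qed
  show ?thesis
  proof
    assume "(f has_sum s) A"
    then show "(\<Sum>\<^sub>\<infinity>x\<in>A. ennreal (f x)) = ennreal s"
      using summable_eq by (auto simp: summable_on_def infsumI)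
  next
    assume sum: "(\<Sum>\<^sub>\<infinity>x\<in>A. ennreal (f x)) = ennreal s"
    have "sum f F \<le> s" if "F \<subseteq> A" "finite F" for F
    proof -
      have "ennreal (sum f F) = (\<Sum>\<^sub>\<infinity>x\<in>F. ennreal (f x))"
        using that partial by simp
      also have "\<dots> \<le> ennreal s"
        using infsum_ennreal_mono_set[OF that(1)] sum by metis
      finally show ?thesis using \<open>0 \<le> s\<close> by (simp add: ennreal_le_iff)
    qed
    then have summable: "f summable_on A"
      by (intro nonneg_bdd_above_summable_on nonneg) (auto simp: bdd_above_def)
    then have "infsum f A = s"
      using summable_eq sum \<open>0 \<le> s\<close> nonneg by (simp add: infsum_nonneg)
    with summable show "(f has_sum s) A" by (simp add: summable_iff_has_sum_infsum)
  qed
qed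

section \<open>Graph distance and geodesics\<close>

lemma gdist_realized:
  assumes "connected_graph E"
  shows "\<exists>\<gamma>. is_path E \<gamma> (gdist E x y) \<and> \<gamma> 0 = x \<and> \<gamma> (gdist E x y) = y"
proof -
  from assms have "\<exists>n \<gamma>. is_path E \<gamma> n \<and> \<gamma> 0 = x \<and> \<gamma> n = y"
    unfolding connected_graph_def by blast
  then show ?thesis unfolding gdist_def by (rule LeastI_ex)
qed

lemma gdist_le_path_length:
  assumes "is_path E \<gamma> n" "\<gamma> 0 = x" "\<gamma> n = y"
  shows "gdist E x y \<le> n"
  unfolding gdist_def by (rule Least_le) (use assms in blast)

definition path_append :: "(nat \<Rightarrow> 'a) \<Rightarrow> nat \<Rightarrow> (nat \<Rightarrow> 'a) \<Rightarrow> nat \<Rightarrow> 'a" where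
  "path_append \<alpha> n \<beta> i = (if i \<le> n then \<alpha> i else \<beta> (i - n))"

lemma is_path_append:
  assumes "is_path E \<alpha> n" "is_path E \<beta> m" "\<alpha> n = \<beta> 0"
  shows "is_path E (path_append \<alpha> n \<beta>) (n + m)"
  unfolding is_path_def
proof (intro allI impI)
  fix k assume k: "k < n + m"
  show "E (path_append \<alpha> n \<beta> k) (path_append \<alpha> n \<beta> (Suc k))"
  proof (cases "k < n")
    case True
    then show ?thesis using assms(1) by (auto simp: path_append_def is_path_def)
  next
    case False
    then have "k - n < m" "Suc k - n = Suc (k - n)" using k by auto
    then show ?thesis using assms False
      by (cases "k = n") (auto simp: path_append_def is_path_def)
  qed
qed

lemma path_append_0 [simp]: "path_append \<alpha> n \<beta> 0 = \<alpha> 0"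
  by (simp add: path_append_def)

lemma path_append_end [simp]: "\<alpha> n = \<beta> 0 \<Longrightarrow> path_append \<alpha> n \<beta> (n + m) = \<beta> m"
  by (auto simp: path_append_def)

lemma gdist_triangle:
  assumes "connected_graph E"
  shows "gdist E x z \<le> gdist E x y + gdist E y z"
proof -
  obtain \<alpha> where \<alpha>: "is_path E \<alpha> (gdist E x y)" "\<alpha> 0 = x" "\<alpha> (gdist E x y) = y"
    using gdist_realized[OF assms] by blast
  obtain \<beta> where \<beta>: "is_path E \<beta> (gdist E y z)" "\<beta> 0 = y" "\<beta> (gdist E y z) = z"
    using gdist_realized[OF assms] by blast
  show ?thesis
    by (rule gdist_le_path_length[OF is_path_append[OF \<alpha>(1) \<beta>(1)]]) (use \<alpha> \<beta> in simp_all)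
qed

definition aligned_pairs :: "('a \<Rightarrow> 'a \<Rightarrow> bool) \<Rightarrow> 'a \<Rightarrow> 'a \<Rightarrow> ('a \<times> 'a) set" where
  "aligned_pairs E u v = {(a, b). gdist E a u + gdist E u v + gdist E v b = gdist E a b}"

lemma gdist_detour:
  assumes "connected_graph E"
  shows "gdist E a b + (if (a, b) \<in> aligned_pairs E u v then 0 else 1)
           \<le> gdist E a u + gdist E u v + gdist E v b"
  using gdist_triangle[OF assms, of a b u] gdist_triangle[OF assms, of u b v]
  by (auto simp: aligned_pairs_def)

lemma geodesic_through_edge:
  assumes conn: "connected_graph E" and geo: "is_geodesic E \<gamma> n" and "k < n"
    and aligned: "(a, b) \<in> aligned_pairs E (\<gamma> 0) (\<gamma> n)"
  shows "\<exists>\<delta> N j. is_geodesic E \<delta> N \<and> \<delta> 0 = a \<and> \<delta> N = b \<and> j < N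
           \<and> \<delta> j = \<gamma> k \<and> \<delta> (Suc j) = \<gamma> (Suc k)"
proof -
  define d1 where "d1 = gdist E a (\<gamma> 0)"
  define d2 where "d2 = gdist E (\<gamma> n) b"
  obtain \<alpha> where \<alpha>: "is_path E \<alpha> d1" "\<alpha> 0 = a" "\<alpha> d1 = \<gamma> 0"
    unfolding d1_def using gdist_realized[OF conn] by blast
  obtain \<beta> where \<beta>: "is_path E \<beta> d2" "\<beta> 0 = \<gamma> n" "\<beta> d2 = b"
    unfolding d2_def using gdist_realized[OF conn] by blast
  have \<gamma>: "is_path E \<gamma> n" "n = gdist E (\<gamma> 0) (\<gamma> n)"
    using geo by (simp_all add: is_geodesic_def)
  define \<delta> where "\<delta> = path_append (path_append \<alpha> d1 \<gamma>) (d1 + n) \<beta>"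
  have "is_path E \<delta> (d1 + n + d2)"
    unfolding \<delta>_def using \<alpha> \<beta> \<gamma>(1) by (intro is_path_append) simp_all
  moreover have "\<delta> 0 = a" and "\<delta> (d1 + n + d2) = b"
    using \<alpha> \<beta> by (simp_all add: \<delta>_def)
  moreover have "d1 + n + d2 = gdist E a b"
    using aligned \<gamma>(2) by (simp add: aligned_pairs_def d1_def d2_def)
  moreover have "\<delta> (d1 + k) = \<gamma> k" and "\<delta> (Suc (d1 + k)) = \<gamma> (Suc k)"
    using \<open>k < n\<close> \<alpha>(3) by (auto simp: \<delta>_def path_append_def)
  moreover have "d1 + k < d1 + n + d2" using \<open>k < n\<close> by simp
  ultimately show ?thesis unfolding is_geodesic_def by metis
qed

section \<open>Couplings and transport cost\<close>

lemma coupling_nonneg: "coupling \<mu> \<nu> \<pi> \<Longrightarrow> 0 \<le> \<pi> p"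
  by (cases p) (simp add: coupling_def)

lemma coupling_marginals_nonneg:
  assumes "coupling \<mu> \<nu> \<pi>"
  shows "0 \<le> \<mu> x" and "0 \<le> \<nu> y"
  using assms unfolding coupling_def by (meson has_sum_nonneg)+

lemma coupling_iff_ennreal:
  "coupling \<mu> \<nu> \<pi> \<longleftrightarrow> (\<forall>p. 0 \<le> \<pi> p) \<and> (\<forall>x. 0 \<le> \<mu> x) \<and> (\<forall>y. 0 \<le> \<nu> y)
     \<and> (\<forall>x. (\<Sum>\<^sub>\<infinity>y. ennreal (\<pi> (x, y))) = ennreal (\<mu> x))
     \<and> (\<forall>y. (\<Sum>\<^sub>\<infinity>x. ennreal (\<pi> (x, y))) = ennreal (\<nu> y))"
  using coupling_marginals_nonneg[of \<mu> \<nu> \<pi>]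
  by (auto simp: coupling_def has_sum_iff_infsum_ennreal)

lemma coupling_ennreal_marginals:
  assumes "coupling \<mu> \<nu> \<pi>"
  shows "(\<Sum>\<^sub>\<infinity>y. ennreal (\<pi> (x, y))) = ennreal (\<mu> x)"
    and "(\<Sum>\<^sub>\<infinity>x. ennreal (\<pi> (x, y))) = ennreal (\<nu> y)"
  using assms by (simp_all add: coupling_iff_ennreal)

lemma coupling_vanishes_outside_supports:
  assumes c: "coupling \<mu> \<nu> \<pi>" and p: "p \<notin> {x. \<mu> x \<noteq> 0} \<times> {y. \<nu> y \<noteq> 0}"
  shows "\<pi> p = 0"
proof (cases p)
  case (Pair a b)
  have nonneg: "0 \<le> \<pi> q" for q using c by (rule coupling_nonneg)
  have row: "((\<lambda>y. \<pi> (a, y)) has_sum \<mu> a) UNIV" and column: "((\<lambda>x. \<pi> (x, b)) has_sum \<nu> b) UNIV"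
    using c by (simp_all add: coupling_def)
  consider "\<mu> a = 0" | "\<nu> b = 0" using p Pair by auto
  then show ?thesis
  proof cases
    case 1
    then show ?thesis using nonneg_has_sum_le_0D[OF row, of b] nonneg Pair by simp
  next
    case 2
    then show ?thesis using nonneg_has_sum_le_0D[OF column, of a] nonneg Pair by simp
  qed
qed

lemma coupling_sum_finite_support:
  assumes "coupling \<mu> \<nu> \<pi>"
  shows "finite {y. \<nu> y \<noteq> 0} \<Longrightarrow> (\<Sum>b | \<nu> b \<noteq> 0. \<pi> (a, b)) = \<mu> a"
    and "finite {x. \<mu> x \<noteq> 0} \<Longrightarrow> (\<Sum>a | \<mu> a \<noteq> 0. \<pi> (a, b)) = \<nu> b"
proof -
  assume "finite {y. \<nu> y \<noteq> 0}"
  then have "((\<lambda>b. \<pi> (a, b)) has_sum (\<Sum>b | \<nu> b \<noteq> 0. \<pi> (a, b))) UNIV"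
    using coupling_vanishes_outside_supports[OF assms] by (intro has_sum_finite_neutralI) auto
  moreover have "((\<lambda>b. \<pi> (a, b)) has_sum \<mu> a) UNIV" using assms by (simp add: coupling_def)
  ultimately show "(\<Sum>b | \<nu> b \<noteq> 0. \<pi> (a, b)) = \<mu> a" by (rule has_sum_unique)
next
  assume "finite {x. \<mu> x \<noteq> 0}"
  then have "((\<lambda>a. \<pi> (a, b)) has_sum (\<Sum>a | \<mu> a \<noteq> 0. \<pi> (a, b))) UNIV"
    using coupling_vanishes_outside_supports[OF assms] by (intro has_sum_finite_neutralI) auto
  moreover have "((\<lambda>a. \<pi> (a, b)) has_sum \<nu> b) UNIV" using assms by (simp add: coupling_def)
  ultimately show "(\<Sum>a | \<mu> a \<noteq> 0. \<pi> (a, b)) = \<nu> b" by (rule has_sum_unique)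
qed

lemma coupling_product:
  assumes "prob_dist \<mu>" "prob_dist \<nu>"
  shows "coupling \<mu> \<nu> (\<lambda>(x, y). \<mu> x * \<nu> y)"
proof -
  have sums: "(\<mu> has_sum 1) UNIV" "(\<nu> has_sum 1) UNIV"
    and nonneg: "\<And>x. 0 \<le> \<mu> x" "\<And>y. 0 \<le> \<nu> y"
    using assms by (simp_all add: prob_dist_def)
  show ?thesis
    unfolding coupling_def
  proof (intro conjI allI)
    show "0 \<le> (\<lambda>(x, y). \<mu> x * \<nu> y) p" for p
      using nonneg by (cases p) simp
    show "((\<lambda>y. (\<lambda>(x, y). \<mu> x * \<nu> y) (x, y)) has_sum \<mu> x) UNIV" for x
      using has_sum_cmult_right[OF sums(2), of "\<mu> x"] by simp
    show "((\<lambda>x. (\<lambda>(x, y). \<mu> x * \<nu> y) (x, y)) has_sum \<nu> y) UNIV" for y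
      using has_sum_cmult_left[OF sums(1), of "\<nu> y"] by simp
  qed
qed

lemma tcost_iterated:
  assumes "\<And>p. 0 \<le> \<pi> p"
  shows "tcost E \<pi> = (\<Sum>\<^sub>\<infinity>x. \<Sum>\<^sub>\<infinity>y. ennreal (real (gdist E x y)) * ennreal (\<pi> (x, y)))"
  unfolding tcost_def by (subst infsum_ennreal_prod) (simp add: assms ennreal_mult'')

lemma tcost_finite_support:
  assumes "finite K" "\<And>p. p \<notin> K \<Longrightarrow> \<pi> p = 0" "\<And>p. 0 \<le> \<pi> p"
  shows "tcost E \<pi> = ennreal (\<Sum>p\<in>K. real (gdist E (fst p) (snd p)) * \<pi> p)"
  unfolding tcost_def using assms by (subst infsum_ennreal_finite_support[of K]) simp_all

lemma tcost_coupling_finite_supports: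
  assumes "coupling \<mu> \<nu> \<pi>" "finite {x. \<mu> x \<noteq> 0}" "finite {y. \<nu> y \<noteq> 0}"
  shows "tcost E \<pi>
    = ennreal (\<Sum>p\<in>{x. \<mu> x \<noteq> 0} \<times> {y. \<nu> y \<noteq> 0}. real (gdist E (fst p) (snd p)) * \<pi> p)"
  using assms coupling_vanishes_outside_supports[OF assms(1)] coupling_nonneg[OF assms(1)]
  by (intro tcost_finite_support) simp_all

lemma W1_le_tcost: "coupling \<mu> \<nu> \<pi> \<Longrightarrow> W1 E \<mu> \<nu> \<le> tcost E \<pi>"
  unfolding W1_def by (rule INF_lower) simp

lemma W1_finite_supports_less_top:
  assumes "prob_dist \<mu>" "prob_dist \<nu>" "finite {x. \<mu> x \<noteq> 0}" "finite {y. \<nu> y \<noteq> 0}"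
  shows "W1 E \<mu> \<nu> < \<infinity>"
proof -
  let ?\<pi> = "\<lambda>(x, y). \<mu> x * \<nu> y"
  have "W1 E \<mu> \<nu> \<le> tcost E ?\<pi>"
    by (rule W1_le_tcost[OF coupling_product[OF assms(1,2)]])
  also have "tcost E ?\<pi> < \<infinity>"
    by (simp only: tcost_coupling_finite_supports[OF coupling_product[OF assms(1,2)] assms(3,4)]
        infinity_ennreal_def ennreal_less_top)
  finally show ?thesis .
qed

lemma exists_coupling_tcost_less:
  assumes "W1 E \<mu> \<nu> < \<infinity>" "0 < \<epsilon>"
  obtains \<pi> where "coupling \<mu> \<nu> \<pi>" "tcost E \<pi> < W1 E \<mu> \<nu> + ennreal \<epsilon>"
proof -
  have "W1 E \<mu> \<nu> + 0 < W1 E \<mu> \<nu> + ennreal \<epsilon>"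
    using assms by (subst ennreal_add_left_cancel_less) auto
  then have "(INF \<pi>\<in>{\<pi>. coupling \<mu> \<nu> \<pi>}. tcost E \<pi>) < W1 E \<mu> \<nu> + ennreal \<epsilon>"
    by (simp add: W1_def)
  then have "\<exists>\<pi>\<in>{\<pi>. coupling \<mu> \<nu> \<pi>}. tcost E \<pi> < W1 E \<mu> \<nu> + ennreal \<epsilon>"
    by (simp only: INF_less_iff)
  then show ?thesis using that by blast
qed

lemma W1_geodesic_split:
  assumes geo: "W1_geodesic E f" and "0 \<le> s" "s \<le> t" "t \<le> 1"
  shows "W1 E (f 0) (f s) + W1 E (f s) (f t) + W1 E (f t) (f 1) = W1 E (f 0) (f 1)"
proof -
  let ?W = "W1 E (f 0) (f 1)"
  have W: "W1 E (f \<sigma>) (f \<tau>) = ennreal (\<tau> - \<sigma>) * ?W" if "0 \<le> \<sigma>" "\<sigma> \<le> \<tau>" "\<tau> \<le> 1" for \<sigma> \<tau>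
  proof -
    have "\<forall>\<sigma>\<in>{0..1}. \<forall>\<tau>\<in>{0..1}. W1 E (f \<sigma>) (f \<tau>) = ennreal \<bar>\<tau> - \<sigma>\<bar> * ?W"
      using geo unfolding W1_geodesic_def by (rule conjunct2)
    moreover have "\<sigma> \<in> {0..1}" "\<tau> \<in> {0..1}" using that by simp_all
    ultimately have "W1 E (f \<sigma>) (f \<tau>) = ennreal \<bar>\<tau> - \<sigma>\<bar> * ?W" by blast
    with that show ?thesis by simp
  qed
  have "ennreal s + ennreal (t - s) + ennreal (1 - t) = 1"
    using assms by (simp add: ennreal_plus[symmetric] del: ennreal_plus)
  then have "ennreal s * ?W + ennreal (t - s) * ?W + ennreal (1 - t) * ?W = ?W"
    by (metis distrib_right mult_1)
  then show ?thesis using W[of 0 s] W[of s t] W[of t 1] assms by simp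
qed

section \<open>Gluing couplings\<close>

text \<open>
  Where \<open>g y = 0\<close> the junk value \<open>_ / 0 = 0\<close> is harmless: both plans vanish there.
\<close>

definition glue :: "('x \<times> 'y \<Rightarrow> real) \<Rightarrow> ('y \<Rightarrow> real) \<Rightarrow> ('y \<times> 'z \<Rightarrow> real) \<Rightarrow> 'x \<times> 'y \<Rightarrow> 'z \<Rightarrow> real"
  where "glue \<alpha> g \<beta> p z = \<alpha> p * \<beta> (snd p, z) / g (snd p)"

lemma glue_nonneg:
  assumes "\<And>p. 0 \<le> \<alpha> p" "\<And>q. 0 \<le> \<beta> q" "\<And>y. 0 \<le> g y"
  shows "0 \<le> glue \<alpha> g \<beta> p z"
  using assms by (simp add: glue_def)

lemma
  fixes \<alpha> :: "'x \<times> 'y \<Rightarrow> real" and \<beta> :: "'y \<times> 'z \<Rightarrow> real"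
  assumes nonneg: "\<And>p. 0 \<le> \<alpha> p" "\<And>q. 0 \<le> \<beta> q" "\<And>y. 0 \<le> g y"
    and \<alpha>_marginal: "\<And>y. (\<Sum>\<^sub>\<infinity>x. ennreal (\<alpha> (x, y))) = ennreal (g y)"
    and \<beta>_marginal: "\<And>y. (\<Sum>\<^sub>\<infinity>z. ennreal (\<beta> (y, z))) = ennreal (g y)"
  shows glue_sum_right: "(\<Sum>\<^sub>\<infinity>z. ennreal (glue \<alpha> g \<beta> (x, y) z)) = ennreal (\<alpha> (x, y))"
    and glue_sum_left: "(\<Sum>\<^sub>\<infinity>x. ennreal (glue \<alpha> g \<beta> (x, y) z)) = ennreal (\<beta> (y, z))"
proof -
  have degenerate: "\<alpha> (x, y) = 0 \<and> \<beta> (y, z) = 0" if "g y = 0"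
    using le_of_infsum_ennreal_eq[of "\<lambda>x. \<alpha> (x, y)" "g y" x, OF \<alpha>_marginal]
      le_of_infsum_ennreal_eq[of "\<lambda>z. \<beta> (y, z)" "g y" z, OF \<beta>_marginal] nonneg that
    by (simp add: order_antisym)
  show "(\<Sum>\<^sub>\<infinity>z. ennreal (glue \<alpha> g \<beta> (x, y) z)) = ennreal (\<alpha> (x, y))"
  proof (cases "g y = 0")
    case False
    have "(\<Sum>\<^sub>\<infinity>z. ennreal (glue \<alpha> g \<beta> (x, y) z))
        = (\<Sum>\<^sub>\<infinity>z. ennreal (\<alpha> (x, y) / g y) * ennreal (\<beta> (y, z)))"
      using nonneg by (intro infsum_cong) (simp add: glue_def ennreal_mult''[symmetric])
    also have "\<dots> = ennreal (\<alpha> (x, y) / g y) * ennreal (g y)"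
      by (simp add: infsum_ennreal_cmult_left \<beta>_marginal)
    finally show ?thesis using False nonneg(3)[of y] by (simp add: ennreal_mult''[symmetric])
  qed (simp add: glue_def degenerate)
  show "(\<Sum>\<^sub>\<infinity>x. ennreal (glue \<alpha> g \<beta> (x, y) z)) = ennreal (\<beta> (y, z))"
  proof (cases "g y = 0")
    case False
    have "(\<Sum>\<^sub>\<infinity>x. ennreal (glue \<alpha> g \<beta> (x, y) z))
        = (\<Sum>\<^sub>\<infinity>x. ennreal (\<alpha> (x, y)) * ennreal (\<beta> (y, z) / g y))"
      using nonneg by (intro infsum_cong) (simp add: glue_def ennreal_mult''[symmetric])
    also have "\<dots> = ennreal (g y) * ennreal (\<beta> (y, z) / g y)"
      by (simp add: infsum_ennreal_cmult_right \<alpha>_marginal)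
    finally show ?thesis using False nonneg by (simp add: ennreal_mult''[symmetric])
  qed (simp add: glue_def degenerate)
qed

lemma gluing_lemma:
  fixes \<pi>1 \<pi>s \<pi>2 :: "'a \<times> 'a \<Rightarrow> real"
  assumes c1: "coupling \<mu>0 \<mu>s \<pi>1" and cs: "coupling \<mu>s \<mu>t \<pi>s" and c2: "coupling \<mu>t \<mu>1 \<pi>2"
  obtains T :: "'a \<Rightarrow> 'a \<Rightarrow> 'a \<Rightarrow> 'a \<Rightarrow> ennreal" where
    "\<And>a u. (\<Sum>\<^sub>\<infinity>v. \<Sum>\<^sub>\<infinity>b. T a u v b) = ennreal (\<pi>1 (a, u))"
    "\<And>u v. (\<Sum>\<^sub>\<infinity>a. \<Sum>\<^sub>\<infinity>b. T a u v b) = ennreal (\<pi>s (u, v))"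
    "\<And>v b. (\<Sum>\<^sub>\<infinity>a. \<Sum>\<^sub>\<infinity>u. T a u v b) = ennreal (\<pi>2 (v, b))"
proof -
  have nonneg: "\<And>p. 0 \<le> \<pi>1 p" "\<And>p. 0 \<le> \<pi>s p" "\<And>p. 0 \<le> \<pi>2 p" "\<And>u. 0 \<le> \<mu>s u" "\<And>v. 0 \<le> \<mu>t v"
    using c1 cs c2 by (simp_all add: coupling_nonneg coupling_marginals_nonneg)
  note glue1 = glue_sum_right[where \<alpha> = \<pi>1 and \<beta> = \<pi>s and g = \<mu>s, OF nonneg(1,2,4)
      coupling_ennreal_marginals(2)[OF c1] coupling_ennreal_marginals(1)[OF cs]]
    glue_sum_left[where \<alpha> = \<pi>1 and \<beta> = \<pi>s and g = \<mu>s, OF nonneg(1,2,4)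
      coupling_ennreal_marginals(2)[OF c1] coupling_ennreal_marginals(1)[OF cs]]
  define \<rho> where "\<rho> = case_prod (glue \<pi>1 \<mu>s \<pi>s)"
  have \<rho>_nonneg: "0 \<le> \<rho> q" for q
    unfolding \<rho>_def using nonneg by (cases q) (simp add: glue_nonneg)
  have \<rho>_marginal: "(\<Sum>\<^sub>\<infinity>p. ennreal (\<rho> (p, v))) = ennreal (\<mu>t v)" for v
  proof -
    have "(\<Sum>\<^sub>\<infinity>p. ennreal (\<rho> (p, v))) = (\<Sum>\<^sub>\<infinity>a. \<Sum>\<^sub>\<infinity>u. ennreal (glue \<pi>1 \<mu>s \<pi>s (a, u) v))"
      by (simp add: \<rho>_def infsum_ennreal_prod)
    also have "\<dots> = (\<Sum>\<^sub>\<infinity>u. \<Sum>\<^sub>\<infinity>a. ennreal (glue \<pi>1 \<mu>s \<pi>s (a, u) v))"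
      by (rule infsum_ennreal_swap)
    also have "\<dots> = ennreal (\<mu>t v)"
      by (simp add: glue1(2) coupling_ennreal_marginals(2)[OF cs])
    finally show ?thesis .
  qed
  note glue2 = glue_sum_right[where \<alpha> = \<rho> and \<beta> = \<pi>2 and g = \<mu>t, OF \<rho>_nonneg nonneg(3,5)
      \<rho>_marginal coupling_ennreal_marginals(1)[OF c2]]
    glue_sum_left[where \<alpha> = \<rho> and \<beta> = \<pi>2 and g = \<mu>t, OF \<rho>_nonneg nonneg(3,5)
      \<rho>_marginal coupling_ennreal_marginals(1)[OF c2]]
  define T where "T a u v b = ennreal (glue \<rho> \<mu>t \<pi>2 ((a, u), v) b)" for a u v b
  show ?thesis
  proof
    show "(\<Sum>\<^sub>\<infinity>v. \<Sum>\<^sub>\<infinity>b. T a u v b) = ennreal (\<pi>1 (a, u))" for a u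
      unfolding T_def glue2(1) by (simp add: \<rho>_def glue1(1))
    show "(\<Sum>\<^sub>\<infinity>a. \<Sum>\<^sub>\<infinity>b. T a u v b) = ennreal (\<pi>s (u, v))" for u v
      unfolding T_def glue2(1) by (simp add: \<rho>_def glue1(2))
    show "(\<Sum>\<^sub>\<infinity>a. \<Sum>\<^sub>\<infinity>u. T a u v b) = ennreal (\<pi>2 (v, b))" for v b
      using glue2(2)[of v b] by (simp add: T_def infsum_ennreal_prod)
  qed
qed

lemma chain_plan_endpoint_marginals:
  fixes T :: "'a \<Rightarrow> 'b \<Rightarrow> 'c \<Rightarrow> 'd \<Rightarrow> ennreal"
  assumes first: "\<And>a u. (\<Sum>\<^sub>\<infinity>v. \<Sum>\<^sub>\<infinity>b. T a u v b) = ennreal (\<pi>1 (a, u))"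
    and last: "\<And>v b. (\<Sum>\<^sub>\<infinity>a. \<Sum>\<^sub>\<infinity>u. T a u v b) = ennreal (\<pi>2 (v, b))"
  shows "(\<Sum>\<^sub>\<infinity>b. \<Sum>\<^sub>\<infinity>u. \<Sum>\<^sub>\<infinity>v. T a u v b) = (\<Sum>\<^sub>\<infinity>u. ennreal (\<pi>1 (a, u)))"
    and "(\<Sum>\<^sub>\<infinity>a. \<Sum>\<^sub>\<infinity>u. \<Sum>\<^sub>\<infinity>v. T a u v b) = (\<Sum>\<^sub>\<infinity>v. ennreal (\<pi>2 (v, b)))"
proof -
  have "(\<Sum>\<^sub>\<infinity>b. \<Sum>\<^sub>\<infinity>u. \<Sum>\<^sub>\<infinity>v. T a u v b) = (\<Sum>\<^sub>\<infinity>u. \<Sum>\<^sub>\<infinity>b. \<Sum>\<^sub>\<infinity>v. T a u v b)"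
    by (rule infsum_ennreal_swap)
  also have "\<dots> = (\<Sum>\<^sub>\<infinity>u. \<Sum>\<^sub>\<infinity>v. \<Sum>\<^sub>\<infinity>b. T a u v b)"
    by (rule infsum_cong, rule infsum_ennreal_swap)
  finally show "(\<Sum>\<^sub>\<infinity>b. \<Sum>\<^sub>\<infinity>u. \<Sum>\<^sub>\<infinity>v. T a u v b) = (\<Sum>\<^sub>\<infinity>u. ennreal (\<pi>1 (a, u)))"
    by (simp add: first)
  have "(\<Sum>\<^sub>\<infinity>a. \<Sum>\<^sub>\<infinity>u. \<Sum>\<^sub>\<infinity>v. T a u v b) = (\<Sum>\<^sub>\<infinity>a. \<Sum>\<^sub>\<infinity>v. \<Sum>\<^sub>\<infinity>u. T a u v b)"
    by (rule infsum_cong, rule infsum_ennreal_swap)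
  also have "\<dots> = (\<Sum>\<^sub>\<infinity>v. \<Sum>\<^sub>\<infinity>a. \<Sum>\<^sub>\<infinity>u. T a u v b)"
    by (rule infsum_ennreal_swap)
  finally show "(\<Sum>\<^sub>\<infinity>a. \<Sum>\<^sub>\<infinity>u. \<Sum>\<^sub>\<infinity>v. T a u v b) = (\<Sum>\<^sub>\<infinity>v. ennreal (\<pi>2 (v, b)))"
    by (simp add: last)
qed

lemma coupling_of_ennreal_plan:
  fixes Q :: "'a \<times> 'a \<Rightarrow> ennreal"
  assumes marginals: "\<And>x. (\<Sum>\<^sub>\<infinity>y. Q (x, y)) = ennreal (\<mu> x)" "\<And>y. (\<Sum>\<^sub>\<infinity>x. Q (x, y)) = ennreal (\<nu> y)"
    and "\<And>x. 0 \<le> \<mu> x" "\<And>y. 0 \<le> \<nu> y"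
  shows "coupling \<mu> \<nu> (\<lambda>p. enn2real (Q p))" and "Q p = ennreal (enn2real (Q p))"
proof -
  have finite: "Q p < top" for p
  proof (cases p)
    case (Pair x y)
    have "Q (x, y) \<le> ennreal (\<mu> x)"
      using infsum_ennreal_ge_term[of y UNIV "\<lambda>y. Q (x, y)"] marginals(1) by simp
    then show ?thesis using Pair by (simp add: le_less_trans)
  qed
  then show "Q p = ennreal (enn2real (Q p))" by simp
  show "coupling \<mu> \<nu> (\<lambda>p. enn2real (Q p))"
    using assms finite by (simp add: coupling_iff_ennreal)
qed

lemma chain_plan_leg_costs:
  fixes T :: "'a \<Rightarrow> 'a \<Rightarrow> 'a \<Rightarrow> 'a \<Rightarrow> ennreal"
  assumes nonneg: "\<And>p. 0 \<le> \<pi>1 p" "\<And>p. 0 \<le> \<pi>s p" "\<And>p. 0 \<le> \<pi>2 p"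
    and first: "\<And>a u. (\<Sum>\<^sub>\<infinity>v. \<Sum>\<^sub>\<infinity>b. T a u v b) = ennreal (\<pi>1 (a, u))"
    and middle: "\<And>u v. (\<Sum>\<^sub>\<infinity>a. \<Sum>\<^sub>\<infinity>b. T a u v b) = ennreal (\<pi>s (u, v))"
    and last: "\<And>v b. (\<Sum>\<^sub>\<infinity>a. \<Sum>\<^sub>\<infinity>u. T a u v b) = ennreal (\<pi>2 (v, b))"
  shows "(\<Sum>\<^sub>\<infinity>a. \<Sum>\<^sub>\<infinity>b. \<Sum>\<^sub>\<infinity>u. \<Sum>\<^sub>\<infinity>v. ennreal (real (gdist E a u)) * T a u v b) = tcost E \<pi>1"
    and "(\<Sum>\<^sub>\<infinity>a. \<Sum>\<^sub>\<infinity>b. \<Sum>\<^sub>\<infinity>u. \<Sum>\<^sub>\<infinity>v. ennreal (real (gdist E u v)) * T a u v b) = tcost E \<pi>s"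
    and "(\<Sum>\<^sub>\<infinity>a. \<Sum>\<^sub>\<infinity>b. \<Sum>\<^sub>\<infinity>u. \<Sum>\<^sub>\<infinity>v. ennreal (real (gdist E v b)) * T a u v b) = tcost E \<pi>2"
proof -
  have "(\<Sum>\<^sub>\<infinity>a. \<Sum>\<^sub>\<infinity>b. \<Sum>\<^sub>\<infinity>u. \<Sum>\<^sub>\<infinity>v. ennreal (real (gdist E a u)) * T a u v b)
      = (\<Sum>\<^sub>\<infinity>a. \<Sum>\<^sub>\<infinity>u. \<Sum>\<^sub>\<infinity>b. \<Sum>\<^sub>\<infinity>v. ennreal (real (gdist E a u)) * T a u v b)"
    by (rule infsum_cong, rule infsum_ennreal_swap)
  also have "\<dots> = (\<Sum>\<^sub>\<infinity>a. \<Sum>\<^sub>\<infinity>u. \<Sum>\<^sub>\<infinity>v. \<Sum>\<^sub>\<infinity>b. ennreal (real (gdist E a u)) * T a u v b)"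
    by (rule infsum_cong, rule infsum_cong, rule infsum_ennreal_swap)
  finally show "(\<Sum>\<^sub>\<infinity>a. \<Sum>\<^sub>\<infinity>b. \<Sum>\<^sub>\<infinity>u. \<Sum>\<^sub>\<infinity>v. ennreal (real (gdist E a u)) * T a u v b) = tcost E \<pi>1"
    by (simp add: infsum_ennreal_cmult_left first tcost_iterated nonneg)
  have "(\<Sum>\<^sub>\<infinity>a. \<Sum>\<^sub>\<infinity>b. \<Sum>\<^sub>\<infinity>u. \<Sum>\<^sub>\<infinity>v. ennreal (real (gdist E u v)) * T a u v b)
      = (\<Sum>\<^sub>\<infinity>a. \<Sum>\<^sub>\<infinity>u. \<Sum>\<^sub>\<infinity>b. \<Sum>\<^sub>\<infinity>v. ennreal (real (gdist E u v)) * T a u v b)"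
    by (rule infsum_cong, rule infsum_ennreal_swap)
  also have "\<dots> = (\<Sum>\<^sub>\<infinity>a. \<Sum>\<^sub>\<infinity>u. \<Sum>\<^sub>\<infinity>v. \<Sum>\<^sub>\<infinity>b. ennreal (real (gdist E u v)) * T a u v b)"
    by (rule infsum_cong, rule infsum_cong, rule infsum_ennreal_swap)
  also have "\<dots> = (\<Sum>\<^sub>\<infinity>u. \<Sum>\<^sub>\<infinity>a. \<Sum>\<^sub>\<infinity>v. \<Sum>\<^sub>\<infinity>b. ennreal (real (gdist E u v)) * T a u v b)"
    by (rule infsum_ennreal_swap)
  also have "\<dots> = (\<Sum>\<^sub>\<infinity>u. \<Sum>\<^sub>\<infinity>v. \<Sum>\<^sub>\<infinity>a. \<Sum>\<^sub>\<infinity>b. ennreal (real (gdist E u v)) * T a u v b)"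
    by (rule infsum_cong, rule infsum_ennreal_swap)
  finally show "(\<Sum>\<^sub>\<infinity>a. \<Sum>\<^sub>\<infinity>b. \<Sum>\<^sub>\<infinity>u. \<Sum>\<^sub>\<infinity>v. ennreal (real (gdist E u v)) * T a u v b) = tcost E \<pi>s"
    by (simp add: infsum_ennreal_cmult_left middle tcost_iterated nonneg)
  have "(\<Sum>\<^sub>\<infinity>a. \<Sum>\<^sub>\<infinity>b. \<Sum>\<^sub>\<infinity>u. \<Sum>\<^sub>\<infinity>v. ennreal (real (gdist E v b)) * T a u v b)
      = (\<Sum>\<^sub>\<infinity>a. \<Sum>\<^sub>\<infinity>b. \<Sum>\<^sub>\<infinity>v. \<Sum>\<^sub>\<infinity>u. ennreal (real (gdist E v b)) * T a u v b)"
    by (rule infsum_cong, rule infsum_cong, rule infsum_ennreal_swap)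
  also have "\<dots> = (\<Sum>\<^sub>\<infinity>a. \<Sum>\<^sub>\<infinity>v. \<Sum>\<^sub>\<infinity>b. \<Sum>\<^sub>\<infinity>u. ennreal (real (gdist E v b)) * T a u v b)"
    by (rule infsum_cong, rule infsum_ennreal_swap)
  also have "\<dots> = (\<Sum>\<^sub>\<infinity>v. \<Sum>\<^sub>\<infinity>a. \<Sum>\<^sub>\<infinity>b. \<Sum>\<^sub>\<infinity>u. ennreal (real (gdist E v b)) * T a u v b)"
    by (rule infsum_ennreal_swap)
  also have "\<dots> = (\<Sum>\<^sub>\<infinity>v. \<Sum>\<^sub>\<infinity>b. \<Sum>\<^sub>\<infinity>a. \<Sum>\<^sub>\<infinity>u. ennreal (real (gdist E v b)) * T a u v b)"
    by (rule infsum_cong, rule infsum_ennreal_swap)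
  finally show "(\<Sum>\<^sub>\<infinity>a. \<Sum>\<^sub>\<infinity>b. \<Sum>\<^sub>\<infinity>u. \<Sum>\<^sub>\<infinity>v. ennreal (real (gdist E v b)) * T a u v b) = tcost E \<pi>2"
    by (simp add: infsum_ennreal_cmult_left last tcost_iterated nonneg)
qed

lemma chain_plan_cost:
  fixes T :: "'a \<Rightarrow> 'a \<Rightarrow> 'a \<Rightarrow> 'a \<Rightarrow> ennreal"
  assumes conn: "connected_graph E"
    and nonneg: "\<And>p. 0 \<le> \<pi>1 p" "\<And>p. 0 \<le> \<pi>s p" "\<And>p. 0 \<le> \<pi>2 p"
    and first: "\<And>a u. (\<Sum>\<^sub>\<infinity>v. \<Sum>\<^sub>\<infinity>b. T a u v b) = ennreal (\<pi>1 (a, u))"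
    and middle: "\<And>u v. (\<Sum>\<^sub>\<infinity>a. \<Sum>\<^sub>\<infinity>b. T a u v b) = ennreal (\<pi>s (u, v))"
    and last: "\<And>v b. (\<Sum>\<^sub>\<infinity>a. \<Sum>\<^sub>\<infinity>u. T a u v b) = ennreal (\<pi>2 (v, b))"
  shows "(\<Sum>\<^sub>\<infinity>a. \<Sum>\<^sub>\<infinity>b. \<Sum>\<^sub>\<infinity>u. \<Sum>\<^sub>\<infinity>v. ennreal (real (gdist E a b)) * T a u v b)
           + (\<Sum>\<^sub>\<infinity>a. \<Sum>\<^sub>\<infinity>b. \<Sum>\<^sub>\<infinity>u. \<Sum>\<^sub>\<infinity>v. if (a, b) \<in> aligned_pairs E u v then 0 else T a u v b)
         \<le> tcost E \<pi>1 + tcost E \<pi>s + tcost E \<pi>2"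
proof -
  define D where "D x y = ennreal (real (gdist E x y))" for x y
  have pointwise: "D a b * T a u v b + (if (a, b) \<in> aligned_pairs E u v then 0 else T a u v b)
      \<le> D a u * T a u v b + D u v * T a u v b + D v b * T a u v b" for a u v b
  proof -
    let ?defect = "if (a, b) \<in> aligned_pairs E u v then 0 else 1 :: nat"
    have "D a b + of_nat ?defect = ennreal (real (gdist E a b + ?defect))"
      by (simp add: D_def)
    also have "\<dots> \<le> ennreal (real (gdist E a u + gdist E u v + gdist E v b))"
      using gdist_detour[OF conn, of a b u v] by (intro ennreal_leI) simp
    also have "\<dots> = D a u + D u v + D v b"
      by (simp add: D_def ennreal_plus[symmetric] del: ennreal_plus)
    finally have "(D a b + of_nat ?defect) * T a u v b \<le> (D a u + D u v + D v b) * T a u v b"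
      by (rule mult_right_mono) simp
    then show ?thesis
      by (cases "(a, b) \<in> aligned_pairs E u v") (simp_all add: distrib_right)
  qed
  have "(\<Sum>\<^sub>\<infinity>a. \<Sum>\<^sub>\<infinity>b. \<Sum>\<^sub>\<infinity>u. \<Sum>\<^sub>\<infinity>v. D a b * T a u v b)
          + (\<Sum>\<^sub>\<infinity>a. \<Sum>\<^sub>\<infinity>b. \<Sum>\<^sub>\<infinity>u. \<Sum>\<^sub>\<infinity>v. if (a, b) \<in> aligned_pairs E u v then 0 else T a u v b)
      = (\<Sum>\<^sub>\<infinity>a. \<Sum>\<^sub>\<infinity>b. \<Sum>\<^sub>\<infinity>u. \<Sum>\<^sub>\<infinity>v.
           D a b * T a u v b + (if (a, b) \<in> aligned_pairs E u v then 0 else T a u v b))"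
    by (simp only: infsum_ennreal_add)
  also have "\<dots> \<le> (\<Sum>\<^sub>\<infinity>a. \<Sum>\<^sub>\<infinity>b. \<Sum>\<^sub>\<infinity>u. \<Sum>\<^sub>\<infinity>v.
           D a u * T a u v b + D u v * T a u v b + D v b * T a u v b)"
    by (intro infsum_ennreal_mono pointwise)
  also have "\<dots> = tcost E \<pi>1 + tcost E \<pi>s + tcost E \<pi>2"
    unfolding D_def using chain_plan_leg_costs[OF nonneg first middle last, of E]
    by (simp only: infsum_ennreal_add)
  finally show ?thesis unfolding D_def .
qed

lemma chain_plan_mass_through:
  fixes T :: "'a \<Rightarrow> 'a \<Rightarrow> 'a \<Rightarrow> 'a \<Rightarrow> ennreal"
  assumes middle: "\<And>u v. (\<Sum>\<^sub>\<infinity>a. \<Sum>\<^sub>\<infinity>b. T a u v b) = ennreal (\<pi>s (u, v))"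
  shows "ennreal (\<pi>s (u, v))
           \<le> (\<Sum>\<^sub>\<infinity>p\<in>aligned_pairs E u v. \<Sum>\<^sub>\<infinity>u'. \<Sum>\<^sub>\<infinity>v'. T (fst p) u' v' (snd p))
             + (\<Sum>\<^sub>\<infinity>a. \<Sum>\<^sub>\<infinity>b. \<Sum>\<^sub>\<infinity>u'. \<Sum>\<^sub>\<infinity>v'. if (a, b) \<in> aligned_pairs E u' v' then 0 else T a u' v' b)"
proof -
  let ?S = "aligned_pairs E u v" and ?t = "\<lambda>p. T (fst p) u v (snd p)"
  have "ennreal (\<pi>s (u, v)) = (\<Sum>\<^sub>\<infinity>p. ?t p)"
    by (simp add: middle infsum_ennreal_prod)
  also have "\<dots> = (\<Sum>\<^sub>\<infinity>p\<in>?S. ?t p) + (\<Sum>\<^sub>\<infinity>p\<in>-?S. ?t p)"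
    by (subst infsum_Un_disjoint[symmetric]) simp_all
  also have "(\<Sum>\<^sub>\<infinity>p\<in>?S. ?t p) \<le> (\<Sum>\<^sub>\<infinity>p\<in>?S. \<Sum>\<^sub>\<infinity>u'. \<Sum>\<^sub>\<infinity>v'. T (fst p) u' v' (snd p))"
    using infsum_ennreal_ge_term2[where f = "\<lambda>u' v'. T (fst p) u' v' (snd p)" for p]
    by (rule infsum_ennreal_mono)
  also have "(\<Sum>\<^sub>\<infinity>p\<in>-?S. ?t p) = (\<Sum>\<^sub>\<infinity>p. if p \<in> ?S then 0 else ?t p)"
    by (rule infsum_cong_neutral) auto
  also have "\<dots> = (\<Sum>\<^sub>\<infinity>a. \<Sum>\<^sub>\<infinity>b. if (a, b) \<in> ?S then 0 else T a u v b)"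
    by (subst infsum_ennreal_prod) (simp only: fst_conv snd_conv)
  also have "\<dots> \<le> (\<Sum>\<^sub>\<infinity>a. \<Sum>\<^sub>\<infinity>b. \<Sum>\<^sub>\<infinity>u'. \<Sum>\<^sub>\<infinity>v'. if (a, b) \<in> aligned_pairs E u' v' then 0 else T a u' v' b)"
    using infsum_ennreal_ge_term2[where f = "\<lambda>u' v'. if (a, b) \<in> aligned_pairs E u' v' then 0 else T a u' v' b"
        for a b]
    by (intro infsum_ennreal_mono) simp
  finally show ?thesis by (simp add: add_mono)
qed

lemma glued_coupling:
  fixes \<pi>1 \<pi>s \<pi>2 :: "'a \<times> 'a \<Rightarrow> real"
  assumes conn: "connected_graph E"
    and c1: "coupling \<mu>0 \<mu>s \<pi>1" and cs: "coupling \<mu>s \<mu>t \<pi>s" and c2: "coupling \<mu>t \<mu>1 \<pi>2"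
  obtains P where "coupling \<mu>0 \<mu>1 P"
    and "tcost E P \<le> tcost E \<pi>1 + tcost E \<pi>s + tcost E \<pi>2"
    and "tcost E P + ennreal (\<pi>s (u, v))
           \<le> tcost E \<pi>1 + tcost E \<pi>s + tcost E \<pi>2 + (\<Sum>\<^sub>\<infinity>p\<in>aligned_pairs E u v. ennreal (P p))"
proof -
  obtain T :: "'a \<Rightarrow> 'a \<Rightarrow> 'a \<Rightarrow> 'a \<Rightarrow> ennreal"
    where first: "\<And>a u. (\<Sum>\<^sub>\<infinity>v. \<Sum>\<^sub>\<infinity>b. T a u v b) = ennreal (\<pi>1 (a, u))"
    and middle: "\<And>u v. (\<Sum>\<^sub>\<infinity>a. \<Sum>\<^sub>\<infinity>b. T a u v b) = ennreal (\<pi>s (u, v))"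
    and last: "\<And>v b. (\<Sum>\<^sub>\<infinity>a. \<Sum>\<^sub>\<infinity>u. T a u v b) = ennreal (\<pi>2 (v, b))"
    using gluing_lemma[OF c1 cs c2] by blast
  have nonneg: "\<And>p. 0 \<le> \<pi>1 p" "\<And>p. 0 \<le> \<pi>s p" "\<And>p. 0 \<le> \<pi>2 p" "\<And>x. 0 \<le> \<mu>0 x" "\<And>y. 0 \<le> \<mu>1 y"
    using c1 cs c2 by (simp_all add: coupling_nonneg coupling_marginals_nonneg)
  define Q where "Q p = (\<Sum>\<^sub>\<infinity>u'. \<Sum>\<^sub>\<infinity>v'. T (fst p) u' v' (snd p))" for p
  have Q_marginals: "(\<Sum>\<^sub>\<infinity>b. Q (a, b)) = ennreal (\<mu>0 a)" "(\<Sum>\<^sub>\<infinity>a. Q (a, b)) = ennreal (\<mu>1 b)" for a b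
    using chain_plan_endpoint_marginals[OF first last]
    by (simp_all add: Q_def coupling_ennreal_marginals(1)[OF c1] coupling_ennreal_marginals(2)[OF c2])
  define P where "P p = enn2real (Q p)" for p
  have coupling: "coupling \<mu>0 \<mu>1 P" and Q_P: "Q p = ennreal (P p)" for p
    unfolding P_def using coupling_of_ennreal_plan[OF Q_marginals nonneg(4,5)] by simp_all
  define M where "M = (\<Sum>\<^sub>\<infinity>a. \<Sum>\<^sub>\<infinity>b. \<Sum>\<^sub>\<infinity>u'. \<Sum>\<^sub>\<infinity>v'.
                         if (a, b) \<in> aligned_pairs E u' v' then 0 else T a u' v' b)"
  have "tcost E P = (\<Sum>\<^sub>\<infinity>a. \<Sum>\<^sub>\<infinity>b. \<Sum>\<^sub>\<infinity>u'. \<Sum>\<^sub>\<infinity>v'. ennreal (real (gdist E a b)) * T a u' v' b)"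
    by (simp add: tcost_iterated coupling_nonneg[OF coupling] Q_P[symmetric] Q_def
        infsum_ennreal_cmult_left)
  then have cost: "tcost E P + M \<le> tcost E \<pi>1 + tcost E \<pi>s + tcost E \<pi>2"
    unfolding M_def using chain_plan_cost[OF conn nonneg(1-3) first middle last] by simp
  have mass: "ennreal (\<pi>s (u, v)) \<le> (\<Sum>\<^sub>\<infinity>p\<in>aligned_pairs E u v. ennreal (P p)) + M"
    using chain_plan_mass_through[where T = T and \<pi>s = \<pi>s and u = u and v = v and E = E, OF middle]
    unfolding M_def Q_P[symmetric] Q_def .
  show thesis
  proof (rule that[OF coupling])
    show "tcost E P \<le> tcost E \<pi>1 + tcost E \<pi>s + tcost E \<pi>2"
      using cost by (rule order_trans[rotated]) simp
    have "tcost E P + ennreal (\<pi>s (u, v)) \<le> tcost E P + M + (\<Sum>\<^sub>\<infinity>p\<in>aligned_pairs E u v. ennreal (P p))"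
      using add_left_mono[OF mass, of "tcost E P"] by (simp add: ac_simps)
    also have "\<dots> \<le> tcost E \<pi>1 + tcost E \<pi>s + tcost E \<pi>2 + (\<Sum>\<^sub>\<infinity>p\<in>aligned_pairs E u v. ennreal (P p))"
      using cost by (rule add_right_mono)
    finally show "tcost E P + ennreal (\<pi>s (u, v))
        \<le> tcost E \<pi>1 + tcost E \<pi>s + tcost E \<pi>2 + (\<Sum>\<^sub>\<infinity>p\<in>aligned_pairs E u v. ennreal (P p))" .
  qed
qed

lemma near_optimal_coupling_through_pair:
  assumes conn: "connected_graph E" and finite: "W1 E \<mu>0 \<mu>1 < \<infinity>"
    and split: "W1 E \<mu>0 \<mu>s + W1 E \<mu>s \<mu>t + W1 E \<mu>t \<mu>1 \<le> W1 E \<mu>0 \<mu>1"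
    and opt: "\<pi>s \<in> Pi1 E \<mu>s \<mu>t" and "0 < \<epsilon>"
  shows "\<exists>P. coupling \<mu>0 \<mu>1 P \<and> tcost E P \<le> W1 E \<mu>0 \<mu>1 + ennreal \<epsilon>
           \<and> ennreal (\<pi>s (u, v)) \<le> (\<Sum>\<^sub>\<infinity>p\<in>aligned_pairs E u v. ennreal (P p)) + ennreal \<epsilon>"
proof -
  let ?W = "W1 E \<mu>0 \<mu>1" and ?h = "ennreal (\<epsilon> / 2)"
  have "W1 E \<mu>0 \<mu>s \<le> ?W" and "W1 E \<mu>t \<mu>1 \<le> ?W"
    using split by (auto intro: order_trans[rotated] simp: add.assoc)
  then have "W1 E \<mu>0 \<mu>s < \<infinity>" and "W1 E \<mu>t \<mu>1 < \<infinity>"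
    using finite by (auto intro: le_less_trans)
  then obtain \<pi>1 \<pi>2 where c1: "coupling \<mu>0 \<mu>s \<pi>1" and t1: "tcost E \<pi>1 < W1 E \<mu>0 \<mu>s + ?h"
    and c2: "coupling \<mu>t \<mu>1 \<pi>2" and t2: "tcost E \<pi>2 < W1 E \<mu>t \<mu>1 + ?h"
    using exists_coupling_tcost_less \<open>0 < \<epsilon>\<close> by (metis half_gt_zero)
  have cs: "coupling \<mu>s \<mu>t \<pi>s" and ts: "tcost E \<pi>s = W1 E \<mu>s \<mu>t"
    using opt by (simp_all add: Pi1_def)
  have "tcost E \<pi>1 + tcost E \<pi>s + tcost E \<pi>2 \<le> (W1 E \<mu>0 \<mu>s + ?h) + W1 E \<mu>s \<mu>t + (W1 E \<mu>t \<mu>1 + ?h)"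
    using t1 t2 ts by (intro add_mono) auto
  also have "\<dots> = (W1 E \<mu>0 \<mu>s + W1 E \<mu>s \<mu>t + W1 E \<mu>t \<mu>1) + (?h + ?h)"
    by (simp add: ac_simps)
  also have "?h + ?h = ennreal \<epsilon>"
    using \<open>0 < \<epsilon>\<close> by (simp add: ennreal_plus[symmetric] del: ennreal_plus)
  finally have total: "tcost E \<pi>1 + tcost E \<pi>s + tcost E \<pi>2 \<le> ?W + ennreal \<epsilon>"
    using split by (meson add_right_mono order_trans)
  obtain P where coupling: "coupling \<mu>0 \<mu>1 P"
    and cost: "tcost E P \<le> tcost E \<pi>1 + tcost E \<pi>s + tcost E \<pi>2"
    and through: "tcost E P + ennreal (\<pi>s (u, v))
      \<le> tcost E \<pi>1 + tcost E \<pi>s + tcost E \<pi>2 + (\<Sum>\<^sub>\<infinity>p\<in>aligned_pairs E u v. ennreal (P p))"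
    by (rule glued_coupling[OF conn c1 cs c2])
  have "?W + ennreal (\<pi>s (u, v)) \<le> tcost E P + ennreal (\<pi>s (u, v))"
    using W1_le_tcost[OF coupling] by (rule add_right_mono)
  also have "\<dots> \<le> ?W + ennreal \<epsilon> + (\<Sum>\<^sub>\<infinity>p\<in>aligned_pairs E u v. ennreal (P p))"
    using through total by (meson add_right_mono order_trans)
  finally have "ennreal (\<pi>s (u, v)) \<le> (\<Sum>\<^sub>\<infinity>p\<in>aligned_pairs E u v. ennreal (P p)) + ennreal \<epsilon>"
    using finite by (auto simp: ac_simps ennreal_add_left_cancel_le)
  moreover have "tcost E P \<le> ?W + ennreal \<epsilon>"
    using cost total by (rule order_trans)
  ultimately show ?thesis using coupling by blast
qed

section \<open>Limits of couplings with finite supports\<close>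

lemma bounded_family_convergent_subseq:
  fixes X :: "nat \<Rightarrow> 'b \<Rightarrow> real"
  assumes "finite K" "\<And>j p. p \<in> K \<Longrightarrow> \<bar>X j p\<bar> \<le> C p"
  shows "\<exists>r L. strict_mono r \<and> (\<forall>p\<in>K. (\<lambda>j. X (r j) p) \<longlonglongrightarrow> L p)"
  using assms
proof (induction K rule: finite_induct)
  case empty
  show ?case by (rule exI[of _ id]) (simp add: strict_mono_def)
next
  case (insert q K)
  then obtain r L where r: "strict_mono r" "\<forall>p\<in>K. (\<lambda>j. X (r j) p) \<longlonglongrightarrow> L p"
    by auto
  have "\<forall>j. X (r j) q \<in> cball 0 (C q)" using insert.prems by simp
  then obtain l r' where r': "strict_mono r'" "((\<lambda>j. X (r j) q) \<circ> r') \<longlonglongrightarrow> l"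
    using seq_compactE[OF compact_imp_seq_compact[OF compact_cball]] by metis
  have "\<forall>p\<in>insert q K. (\<lambda>j. X ((r \<circ> r') j) p) \<longlonglongrightarrow> (L(q := l)) p"
    using r'(2) LIMSEQ_subseq_LIMSEQ[OF _ r'(1)] r(2) by (auto simp: o_def)
  then show ?case using strict_mono_o[OF r(1) r'(1)] by blast
qed

lemma coupling_convergent_subseq:
  fixes P :: "nat \<Rightarrow> 'a \<times> 'a \<Rightarrow> real"
  assumes A: "finite {x. \<mu> x \<noteq> 0}" and B: "finite {y. \<nu> y \<noteq> 0}"
    and couplings: "\<And>j. coupling \<mu> \<nu> (P j)"
  obtains r L where "strict_mono r" "coupling \<mu> \<nu> L" "\<And>p. (\<lambda>j. P (r j) p) \<longlonglongrightarrow> L p"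
proof -
  let ?K = "{x. \<mu> x \<noteq> 0} \<times> {y. \<nu> y \<noteq> 0}"
  have "\<bar>P j p\<bar> \<le> \<mu> (fst p)" for j p
    using le_of_infsum_ennreal_eq[OF coupling_ennreal_marginals(1)[OF couplings]]
      coupling_nonneg[OF couplings] coupling_marginals_nonneg(1)[OF couplings]
    by (cases p) simp
  then obtain r L0 where r: "strict_mono r" and conv0: "\<forall>p\<in>?K. (\<lambda>j. P (r j) p) \<longlonglongrightarrow> L0 p"
    using bounded_family_convergent_subseq[of ?K P "\<lambda>p. \<mu> (fst p)"] A B by blast
  define L where "L p = (if p \<in> ?K then L0 p else 0)" for p
  have conv: "(\<lambda>j. P (r j) p) \<longlonglongrightarrow> L p" for p
  proof (cases "p \<in> ?K")
    case True
    then show ?thesis using conv0 by (simp only: L_def if_True)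
  next
    case False
    then show ?thesis using coupling_vanishes_outside_supports[OF couplings] by (simp add: L_def)
  qed
  have L: "coupling \<mu> \<nu> L"
    unfolding coupling_def
  proof (intro conjI allI)
    show "0 \<le> L p" for p
      by (rule LIMSEQ_le_const[OF conv]) (use coupling_nonneg[OF couplings] in auto)
    show "((\<lambda>b. L (a, b)) has_sum \<mu> a) UNIV" for a
    proof (rule has_sum_finite_neutralI[OF B])
      have "(\<lambda>j. \<Sum>b | \<nu> b \<noteq> 0. P (r j) (a, b)) \<longlonglongrightarrow> (\<Sum>b | \<nu> b \<noteq> 0. L (a, b))"
        by (intro tendsto_sum conv)
      then show "\<mu> a = (\<Sum>b | \<nu> b \<noteq> 0. L (a, b))"
        by (simp add: coupling_sum_finite_support(1)[OF couplings B] LIMSEQ_const_iff)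
    qed (simp_all add: L_def)
    show "((\<lambda>a. L (a, b)) has_sum \<nu> b) UNIV" for b
    proof (rule has_sum_finite_neutralI[OF A])
      have "(\<lambda>j. \<Sum>a | \<mu> a \<noteq> 0. P (r j) (a, b)) \<longlonglongrightarrow> (\<Sum>a | \<mu> a \<noteq> 0. L (a, b))"
        by (intro tendsto_sum conv)
      then show "\<nu> b = (\<Sum>a | \<mu> a \<noteq> 0. L (a, b))"
        by (simp add: coupling_sum_finite_support(2)[OF couplings A] LIMSEQ_const_iff)
    qed (simp_all add: L_def)
  qed
  from r L conv show thesis by (rule that)
qed

lemma optimal_limit_of_near_optimal_couplings:
  fixes P :: "nat \<Rightarrow> 'a \<times> 'a \<Rightarrow> real"
  assumes A: "finite {x. \<mu> x \<noteq> 0}" and B: "finite {y. \<nu> y \<noteq> 0}"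
    and couplings: "\<And>j. coupling \<mu> \<nu> (P j)"
    and near_optimal: "\<And>j. tcost E (P j) \<le> W1 E \<mu> \<nu> + ennreal (e j)"
    and e: "e \<longlonglongrightarrow> 0" "\<And>j. 0 \<le> e j"
  obtains r L where "strict_mono r" "L \<in> Pi1 E \<mu> \<nu>" "\<And>p. (\<lambda>j. P (r j) p) \<longlonglongrightarrow> L p"
proof -
  define cost where
    "cost Q = (\<Sum>p\<in>{x. \<mu> x \<noteq> 0} \<times> {y. \<nu> y \<noteq> 0}. real (gdist E (fst p) (snd p)) * Q p)" for Q
  have tcost_eq: "tcost E Q = ennreal (cost Q)" if "coupling \<mu> \<nu> Q" for Q
    unfolding cost_def using that A B by (rule tcost_coupling_finite_supports)
  obtain r L where r: "strict_mono r" and L: "coupling \<mu> \<nu> L"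
    and conv: "\<And>p. (\<lambda>j. P (r j) p) \<longlonglongrightarrow> L p"
    using coupling_convergent_subseq[where P = P, OF A B couplings] by blast
  have "W1 E \<mu> \<nu> \<le> ennreal (cost L)"
    using W1_le_tcost[where E = E, OF L] tcost_eq[OF L] by simp
  then obtain w where w: "W1 E \<mu> \<nu> = ennreal w" "0 \<le> w"
    by (cases "W1 E \<mu> \<nu>" rule: ennreal_cases) (auto simp: top_unique)
  have "cost L \<le> w"
  proof (rule LIMSEQ_le)
    show "(\<lambda>j. cost (P (r j))) \<longlonglongrightarrow> cost L"
      unfolding cost_def by (intro tendsto_intros conv)
    show "(\<lambda>j. w + e (r j)) \<longlonglongrightarrow> w"
      using tendsto_add[OF tendsto_const LIMSEQ_subseq_LIMSEQ[OF e(1) r]] by (simp add: o_def)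
    have "cost (P (r j)) \<le> w + e (r j)" for j
    proof -
      have "ennreal (cost (P (r j))) \<le> ennreal (w + e (r j))"
        using near_optimal[of "r j"] tcost_eq[OF couplings] w e(2) by (simp add: ennreal_plus)
      then show ?thesis using w(2) e(2)[of "r j"] by (simp add: ennreal_le_iff del: ennreal_plus)
    qed
    then show "\<exists>N. \<forall>j\<ge>N. cost (P (r j)) \<le> w + e (r j)" by blast
  qed
  then have "tcost E L \<le> W1 E \<mu> \<nu>"
    using tcost_eq[OF L] w by simp
  then have "L \<in> Pi1 E \<mu> \<nu>"
    using W1_le_tcost[where E = E, OF L] L by (simp add: Pi1_def antisym)
  from r this conv show thesis by (rule that)
qed

lemma optimal_coupling_charging:
  fixes S :: "('a \<times> 'a) set"
  assumes A: "finite {x. \<mu> x \<noteq> 0}" and B: "finite {y. \<nu> y \<noteq> 0}" and "0 < m"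
    and approx: "\<And>\<epsilon>. 0 < \<epsilon> \<Longrightarrow> \<exists>P. coupling \<mu> \<nu> P \<and> tcost E P \<le> W1 E \<mu> \<nu> + ennreal \<epsilon>
                   \<and> ennreal m \<le> (\<Sum>\<^sub>\<infinity>p\<in>S. ennreal (P p)) + ennreal \<epsilon>"
  shows "\<exists>L\<in>Pi1 E \<mu> \<nu>. \<exists>p\<in>S. 0 < L p"
proof -
  let ?K = "{x. \<mu> x \<noteq> 0} \<times> {y. \<nu> y \<noteq> 0}"
  define e where "e j = inverse (real (Suc j))" for j
  have e: "e \<longlonglongrightarrow> 0" "\<And>j. 0 \<le> e j"
    unfolding e_def using LIMSEQ_inverse_real_of_nat by simp_all
  have "\<forall>j. \<exists>P. coupling \<mu> \<nu> P \<and> tcost E P \<le> W1 E \<mu> \<nu> + ennreal (e j)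
                \<and> ennreal m \<le> (\<Sum>\<^sub>\<infinity>p\<in>S. ennreal (P p)) + ennreal (e j)"
    using approx by (simp add: e_def)
  then obtain P where couplings: "\<And>j. coupling \<mu> \<nu> (P j)"
    and cost: "\<And>j. tcost E (P j) \<le> W1 E \<mu> \<nu> + ennreal (e j)"
    and mass: "\<And>j. ennreal m \<le> (\<Sum>\<^sub>\<infinity>p\<in>S. ennreal (P j p)) + ennreal (e j)"
    by metis
  obtain r L where r: "strict_mono r" and L: "L \<in> Pi1 E \<mu> \<nu>"
    and conv: "\<And>p. (\<lambda>j. P (r j) p) \<longlonglongrightarrow> L p"
    using optimal_limit_of_near_optimal_couplings[where P = P and e = e, OF A B couplings cost e] by blast
  have "m \<le> (\<Sum>p\<in>S \<inter> ?K. L p)"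
  proof (rule LIMSEQ_le)
    show "(\<lambda>j. m - e (r j)) \<longlonglongrightarrow> m"
      using tendsto_diff[OF tendsto_const LIMSEQ_subseq_LIMSEQ[OF e(1) r]] by (simp add: o_def)
    show "(\<lambda>j. \<Sum>p\<in>S \<inter> ?K. P (r j) p) \<longlonglongrightarrow> (\<Sum>p\<in>S \<inter> ?K. L p)"
      by (intro tendsto_sum conv)
    have "m - e j \<le> (\<Sum>p\<in>S \<inter> ?K. P j p)" for j
    proof -
      have "ennreal m \<le> ennreal ((\<Sum>p\<in>S \<inter> ?K. P j p) + e j)"
        using mass[of j] e(2)[of j]
          infsum_ennreal_finite_support[of ?K "P j" S] A B
          coupling_vanishes_outside_supports[OF couplings] coupling_nonneg[OF couplings]
        by (simp add: ennreal_plus sum_nonneg)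
      moreover have "0 \<le> (\<Sum>p\<in>S \<inter> ?K. P j p) + e j"
        by (intro add_nonneg_nonneg sum_nonneg coupling_nonneg[OF couplings] e(2))
      ultimately show ?thesis by (simp add: ennreal_le_iff del: ennreal_plus)
    qed
    then show "\<exists>N. \<forall>j\<ge>N. m - e (r j) \<le> (\<Sum>p\<in>S \<inter> ?K. P (r j) p)" by blast
  qed
  have "\<exists>p\<in>S \<inter> ?K. 0 < L p"
  proof (rule ccontr)
    assume "\<not> (\<exists>p\<in>S \<inter> ?K. 0 < L p)"
    then have "(\<Sum>p\<in>S \<inter> ?K. L p) \<le> 0" by (intro sum_nonpos) (simp add: not_less)
    with \<open>m \<le> (\<Sum>p\<in>S \<inter> ?K. L p)\<close> \<open>0 < m\<close> show False by simp
  qed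
  with L show ?thesis by blast
qed

theorem proposition2p14:
  fixes E :: "'a \<Rightarrow> 'a \<Rightarrow> bool" and f :: "real \<Rightarrow> 'a \<Rightarrow> real"
    and s t :: real and x y :: 'a
  assumes "simple_graph E" and "connected_graph E" and "locally_finite E"
    and "finite {v. f 0 v \<noteq> 0}" and "finite {v. f 1 v \<noteq> 0}"
    and "W1_geodesic E f"
    and "0 \<le> s" and "s \<le> t" and "t \<le> 1"
    and "E x y"
    and "W1_orient E (f s) (f t) x y"
  shows "W1_orient E (f 0) (f 1) x y"
proof -
  obtain \<gamma> n k where geo: "is_geodesic E \<gamma> n" and "(\<gamma> 0, \<gamma> n) \<in> Csupp E (f s) (f t)"
    and "k < n" "\<gamma> k = x" "\<gamma> (Suc k) = y"
    using assms(11) unfolding W1_orient_def by blast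
  then obtain \<pi>s where opt: "\<pi>s \<in> Pi1 E (f s) (f t)" and "0 < \<pi>s (\<gamma> 0, \<gamma> n)"
    unfolding Csupp_def by blast
  have "prob_dist (f 0)" "prob_dist (f 1)"
    using assms(6) by (simp_all add: W1_geodesic_def)
  then have finite: "W1 E (f 0) (f 1) < \<infinity>"
    using W1_finite_supports_less_top assms(4,5) by blast
  have split: "W1 E (f 0) (f s) + W1 E (f s) (f t) + W1 E (f t) (f 1) \<le> W1 E (f 0) (f 1)"
    using W1_geodesic_split[OF assms(6-9)] by simp
  obtain L p where "L \<in> Pi1 E (f 0) (f 1)" "p \<in> aligned_pairs E (\<gamma> 0) (\<gamma> n)" "0 < L p"
    using optimal_coupling_charging[OF assms(4,5) \<open>0 < \<pi>s (\<gamma> 0, \<gamma> n)\<close>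
        near_optimal_coupling_through_pair[OF assms(2) finite split opt]]
    by blast
  moreover obtain a b where "p = (a, b)" by fastforce
  ultimately have "(a, b) \<in> Csupp E (f 0) (f 1)" and aligned: "(a, b) \<in> aligned_pairs E (\<gamma> 0) (\<gamma> n)"
    unfolding Csupp_def by blast+
  moreover obtain \<delta> N j where "is_geodesic E \<delta> N" "\<delta> 0 = a" "\<delta> N = b" "j < N" "\<delta> j = x" "\<delta> (Suc j) = y"
    using geodesic_through_edge[OF assms(2) geo \<open>k < n\<close> aligned] \<open>\<gamma> k = x\<close> \<open>\<gamma> (Suc k) = y\<close> by blast
  ultimately show ?thesis
    using assms(10) unfolding W1_orient_def by blast
qed

end
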